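(* Let $\delta$ be the differential defined in the context. Then: (1) $\ker(\delta:\mathfrak{lie}_1\to\mathfrak{lie}_2)=\mathfrak{lie}_1$; (2) $\ker(\delta:\mathfrak{tr}_1\to\mathfrak{tr}_2)=k\,\mathrm{Tr}(x)$; (3) $\ker(\delta:\mathfrak{lie}_2\to\mathfrak{lie}_3)/\mathrm{im}(\delta:\mathfrak{lie}_1\to\mathfrak{lie}_2)$ is one-dimensional, spanned by the class of $[x,y]$; (4) $\ker(\delta:\mathfrak{tr}_2\to\mathfrak{tr}_3)=\mathrm{im}(\delta:\mathfrak{tr}_1\to\mathfrak{tr}_2)$.
   Context: Let $k$ be a field of characteristic zero. For $n\ge 1$, $\mathfrak{lie}_n$ is the degree completion of the free Lie algebra over $k$ on generators $x_1,\dots,x_n$ (graded by word length), and $\mathrm{Ass}_n$ is the degree completion of the free associative algebra on $x_1,\dots,x_n$; for small $n$ the generators are written $x,y,z,w$. Let $\mathrm{Ass}_n^+$ be its part of positive degree and $\mathfrak{tr}_n=\mathrm{Ass}_n^+/\langle ab-ba : a,b\in\mathrm{Ass}_n\rangle$ (quotient by the closed span of commutators), a graded vector space; $\mathrm{Tr}:\mathrm{Ass}_n\to\mathfrak{tr}_n$ denotes the projection (killing constants). For an element $f(x_1,\dots,x_n)$ of $\mathfrak{lie}_n$ or $\mathfrak{tr}_n$, expressions such as $f(x_1,\dots,x_i+x_{i+1},\dots,x_{n+1})$ denote the image under the continuous algebra homomorphism substituting the indicated elements for the generators. The differential $\delta:\mathfrak{lie}_n\to\mathfrak{lie}_{n+1}$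 (and likewise $\delta:\mathfrak{tr}_n\to\mathfrak{tr}_{n+1}$) is $(\delta f)(x_1,\dots,x_{n+1})=f(x_2,\dots,x_{n+1})+\sum_{i=1}^n(-1)^i f(x_1,\dots,x_i+x_{i+1},\dots,x_{n+1})+(-1)^{n+1}f(x_1,\dots,x_n)$. *)

theory Defs
  imports Main
begin

text \<open>Formal noncommutative power series over a coefficient field 'k in letters
  0,1,2,... (letter i stands for the generator x_(i+1)).  A series is a function
  from words (lists of letters) to coefficients; the degree completion allows
  arbitrary (infinite) support.\<close>

type_synonym 'k ser = "nat list \<Rightarrow> 'k"

definition ass :: "nat \<Rightarrow> 'k::field ser \<Rightarrow> bool" where
  "ass n f \<longleftrightarrow> (\<forall>w. \<not> set w \<subseteq> {..<n} \<longrightarrow> f w = 0)"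

definition ass_pos :: "nat \<Rightarrow> 'k::field ser \<Rightarrow> bool" where
  "ass_pos n f \<longleftrightarrow> ass n f \<and> f [] = 0"

definition szero :: "'k::field ser" where "szero = (\<lambda>w. 0)"
definition sadd :: "'k::field ser \<Rightarrow> 'k ser \<Rightarrow> 'k ser" where
  "sadd f g = (\<lambda>w. f w + g w)"
definition ssub :: "'k::field ser \<Rightarrow> 'k ser \<Rightarrow> 'k ser" where
  "ssub f g = (\<lambda>w. f w - g w)"
definition ssmult :: "'k::field \<Rightarrow> 'k ser \<Rightarrow> 'k ser" where
  "ssmult c f = (\<lambda>w. c * f w)"

definition smul :: "'k::field ser \<Rightarrow> 'k ser \<Rightarrow> 'k ser" where
  "smul f g = (\<lambda>w. \<Sum>i\<le>length w. f (take i w) * g (drop i w))"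

definition sbracket :: "'k::field ser \<Rightarrow> 'k ser \<Rightarrow> 'k ser" where
  "sbracket f g = ssub (smul f g) (smul g f)"

definition gen :: "nat \<Rightarrow> 'k::field ser" where
  "gen i = (\<lambda>w. if w = [i] then 1 else 0)"

definition hom :: "nat \<Rightarrow> 'k::field ser \<Rightarrow> 'k ser" where
  "hom d f = (\<lambda>w. if length w = d then f w else 0)"

text \<open>Lie polynomials in n generators: the Lie subalgebra of the free associative
  algebra generated by the generators (the free Lie algebra, embedded in the free
  associative algebra).\<close>
inductive_set lie_poly :: "nat \<Rightarrow> 'k::field ser set" for n where
  lp_gen: "i < n \<Longrightarrow> gen i \<in> lie_poly n"
| lp_zero: "szero \<in> lie_poly n"
| lp_add: "f \<in> lie_poly n \<Longrightarrow> g \<in> lie_poly n \<Longrightarrow> sadd f g \<in> lie_poly n"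
| lp_smult: "f \<in> lie_poly n \<Longrightarrow> ssmult c f \<in> lie_poly n"
| lp_bracket: "f \<in> lie_poly n \<Longrightarrow> g \<in> lie_poly n \<Longrightarrow> sbracket f g \<in> lie_poly n"

definition lie :: "nat \<Rightarrow> 'k::field ser \<Rightarrow> bool" where
  "lie n f \<longleftrightarrow> ass n f \<and> (\<forall>d. hom d f \<in> lie_poly n)"

inductive_set comm_span :: "nat \<Rightarrow> 'k::field ser set" for n where
  cs_comm: "ass n a \<Longrightarrow> ass n b \<Longrightarrow> sbracket a b \<in> comm_span n"
| cs_zero: "szero \<in> comm_span n"
| cs_add: "f \<in> comm_span n \<Longrightarrow> g \<in> comm_span n \<Longrightarrow> sadd f g \<in> comm_span n"
| cs_smult: "f \<in> comm_span n \<Longrightarrow> ssmult c f \<in> comm_span n"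

text \<open>Closure of the commutator span in the degree-completion topology.
  tr_n = Ass_n^+ / comm_closed n, so Tr(f) = Tr(g) for f, g in Ass_n^+
  iff f - g is in comm_closed n.\<close>
definition comm_closed :: "nat \<Rightarrow> 'k::field ser \<Rightarrow> bool" where
  "comm_closed n f \<longleftrightarrow> ass n f \<and>
     (\<forall>N. \<exists>s\<in>comm_span n. \<forall>w. length w < N \<longrightarrow> f w = s w)"

text \<open>Continuous algebra homomorphism Ass_n -> Ass_m determined by a linear
  substitution: letter j is sent to sum_l (sig j l) x_l.\<close>
definition subst :: "nat \<Rightarrow> (nat \<Rightarrow> nat \<Rightarrow> 'k::field) \<Rightarrow> 'k ser \<Rightarrow> 'k ser" where
  "subst n sig f = (\<lambda>w. \<Sum>u\<in>{u. length u = length w \<and> set u \<subseteq> {..<n}}.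
       f u * (\<Prod>t<length w. sig (u ! t) (w ! t)))"

text \<open>f(x_2,...,x_{n+1})\<close>
definition sig_first :: "nat \<Rightarrow> nat \<Rightarrow> 'k::field" where
  "sig_first j l = (if l = j + 1 then 1 else 0)"

text \<open>f(x_1,...,x_i + x_{i+1},...,x_{n+1}) for 1 <= i <= n (1-indexed i).\<close>
definition sig_mid :: "nat \<Rightarrow> nat \<Rightarrow> nat \<Rightarrow> 'k::field" where
  "sig_mid i j l =
     (if j + 1 < i then (if l = j then 1 else 0)
      else if j + 1 = i then (if l = j \<or> l = j + 1 then 1 else 0)
      else (if l = j + 1 then 1 else 0))"

text \<open>f(x_1,...,x_n)\<close>
definition sig_last :: "nat \<Rightarrow> nat \<Rightarrow> 'k::field" where
  "sig_last j l = (if l = j then 1 else 0)"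

definition delta :: "nat \<Rightarrow> 'k::field ser \<Rightarrow> 'k ser" where
  "delta n f = (\<lambda>w. subst n sig_first f w
      + (\<Sum>i=1..n. (-1) ^ i * subst n (sig_mid i) f w)
      + (-1) ^ (n + 1) * subst n sig_last f w)"

end

theory Submission
  imports Defs
begin

text \<open>Over a field of characteristic zero, a series \<open>h\<close> without constant term lies in the
  closure of the commutator span (that is, \<open>Tr h = 0\<close>) iff all its cyclic sums
  \<open>\<Sum>\<^sub>i h (rotate i w)\<close> vanish, and cyclic summation commutes with \<open>\<delta>\<close>; so statements
  about \<open>tr\<^sub>n\<close> become statements about rotation invariant coefficient functions.

  On one letter, \<open>\<delta>\<close> only reads the coefficients of the powers \<open>x\<^sup>d\<close>, and a Lie series
  has vanishing cyclic sums away from degree one; this gives (1) and (2).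

  On two letters, evaluating \<open>\<delta>F = 0\<close> at words in the letters \<open>0, 1, 2\<close> shows that a
  2-cocycle \<open>F\<close> vanishes on pure powers and takes a single value on the binary words of a
  given length that contain both letters (for length two this needs \<open>F\<close> rotation invariant).
  Hence a Lie cocycle is a multiple of \<open>[x, y]\<close>, the cyclic sums killing the longer words,
  which gives (3); and a rotation invariant cocycle is \<open>\<delta>\<close> of a series in \<open>x\<close>, which
  together with \<open>\<delta>\<delta> = 0\<close> gives (4).\<close>

lemma map_const_replicate: "(\<And>x. x \<in> set xs \<Longrightarrow> p x = a) \<Longrightarrow> map p xs = replicate (length xs) a"
  by (induct xs) auto

lemma replicate_eq_singleton_iff: "replicate d a = [b] \<longleftrightarrow> d = 1 \<and> a = b"
  by (cases d) auto

lemma rotate_replicate [simp]: "rotate i (replicate d a) = replicate d a"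
proof -
  have "\<forall>y\<in>set (rotate i (replicate d a)). y = a" by simp
  then have "replicate (length (rotate i (replicate d a))) a = rotate i (replicate d a)"
    by (rule replicate_length_same)
  then show ?thesis by simp
qed

lemma prod_lessThan_indicator:
  "(\<Prod>t<(m::nat). (if P t then 1 else 0::'a::comm_semiring_1)) = (if \<forall>t<m. P t then 1 else 0)"
  by (induct m) (auto simp: less_Suc_eq)

lemma ass_szero: "ass n szero"
  by (simp add: ass_def szero_def)

lemma ass_ssub: "ass n f \<Longrightarrow> ass n g \<Longrightarrow> ass n (ssub f g)"
  by (simp add: ass_def ssub_def)

lemma sadd_szero: "sadd f szero = f"
  by (simp add: fun_eq_iff sadd_def szero_def)

lemma ssub_eq_szero_iff: "ssub f g = szero \<longleftrightarrow> f = g"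
  by (simp add: fun_eq_iff ssub_def szero_def)

lemma ass_1_ext:
  assumes "ass 1 f" "ass 1 g" "\<And>d. f (replicate d 0) = g (replicate d 0)"
  shows "f = g"
proof
  fix w :: "nat list"
  show "f w = g w"
  proof (cases "set w \<subseteq> {0}")
    case True
    then have "w = replicate (length w) 0" by (metis replicate_length_same singletonD subsetD)
    then show ?thesis using assms(3) by metis
  next
    case False
    moreover have "{..<1::nat} = {0}" by auto
    ultimately show ?thesis using assms(1,2) by (simp add: ass_def)
  qed
qed

section \<open>The coface formula for the differential\<close>

lemma subst_eq_map:
  fixes sig :: "nat \<Rightarrow> nat \<Rightarrow> 'k::field"
  assumes sig: "\<And>j l. j < n \<Longrightarrow> sig j l = (if j = p l \<and> q l then 1 else 0)"
    and range: "\<And>l. q l \<Longrightarrow> p l < n"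
  shows "subst n sig f w = (if \<forall>l\<in>set w. q l then f (map p w) else 0)"
proof -
  let ?U = "{u. length u = length w \<and> set u \<subseteq> {..<n}}"
  have fin: "finite ?U"
    using finite_lists_length_eq[of "{..<n}" "length w"] by (simp add: conj_commute)
  have "subst n sig f w = (\<Sum>u\<in>?U. if u = map p w then (if \<forall>l\<in>set w. q l then f u else 0) else 0)"
    unfolding subst_def
  proof (rule sum.cong[OF refl])
    fix u assume u: "u \<in> ?U"
    have "(\<Prod>t<length w. sig (u ! t) (w ! t)) =
          (\<Prod>t<length w. if u ! t = p (w ! t) \<and> q (w ! t) then 1 else 0)"
      using u by (intro prod.cong refl sig) (auto simp: subset_iff)
    also have "\<dots> = (if \<forall>t<length w. u ! t = p (w ! t) \<and> q (w ! t) then 1 else 0)"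
      by (rule prod_lessThan_indicator)
    also have "(\<forall>t<length w. u ! t = p (w ! t) \<and> q (w ! t)) \<longleftrightarrow> u = map p w \<and> (\<forall>l\<in>set w. q l)"
      using u by (auto simp: list_eq_iff_nth_eq in_set_conv_nth) (metis nth_mem)
    finally show "f u * (\<Prod>t<length w. sig (u ! t) (w ! t)) =
        (if u = map p w then (if \<forall>l\<in>set w. q l then f u else 0) else 0)" by auto
  qed
  also have "\<dots> = (if map p w \<in> ?U then (if \<forall>l\<in>set w. q l then f (map p w) else 0) else 0)"
    by (rule sum.delta[OF fin])
  also have "\<dots> = (if \<forall>l\<in>set w. q l then f (map p w) else 0)"
    using range by auto
  finally show ?thesis .
qed

lemma delta_eq:
  "delta n f w = (if \<forall>l\<in>set w. 1 \<le> l \<and> l \<le> n then f (map (\<lambda>l. l - 1) w) else 0)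
     + (\<Sum>i=1..n. (-1) ^ i * (if \<forall>l\<in>set w. l \<le> n then f (map (\<lambda>l. if l < i then l else l - 1) w) else 0))
     + (-1) ^ (n + 1) * (if \<forall>l\<in>set w. l < n then f w else 0)"
proof -
  have "subst n sig_first f w = (if \<forall>l\<in>set w. 1 \<le> l \<and> l \<le> n then f (map (\<lambda>l. l - 1) w) else 0)"
    by (rule subst_eq_map) (auto simp: sig_first_def)
  moreover have "subst n (sig_mid i) f w =
      (if \<forall>l\<in>set w. l \<le> n then f (map (\<lambda>l. if l < i then l else l - 1) w) else 0)"
    if "i \<in> {1..n}" for i
    using that by (intro subst_eq_map) (auto simp: sig_mid_def)
  moreover have "subst n sig_last f w = (if \<forall>l\<in>set w. l < n then f w else 0)"
    using subst_eq_map[of n sig_last "\<lambda>l. l" "\<lambda>l. l < n" f w] by (auto simp: sig_last_def)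
  ultimately show ?thesis unfolding delta_def by simp
qed

lemma ass_Suc_delta: "ass (Suc n) (delta n f)"
  unfolding ass_def
proof (intro allI impI)
  fix w :: "nat list"
  assume "\<not> set w \<subseteq> {..<Suc n}"
  then obtain x where "x \<in> set w" "n < x" by (auto simp: subset_iff less_Suc_eq_le not_le)
  then have "\<not> (\<forall>l\<in>set w. 1 \<le> l \<and> l \<le> n)" "\<not> (\<forall>l\<in>set w. l \<le> n)"
    "\<not> (\<forall>l\<in>set w. l < n)"
    by (auto intro!: bexI[where x = x])
  then show "delta n f w = 0" unfolding delta_eq by (simp only: if_False) simp
qed

lemma delta_1_eq:
  "delta 1 f w = f (replicate (length w) 0) *
     ((if \<forall>l\<in>set w. l = 1 then 1 else 0) - (if \<forall>l\<in>set w. l \<le> 1 then 1 else 0)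
      + (if \<forall>l\<in>set w. l = 0 then 1 else 0))"
proof -
  let ?z = "replicate (length w) 0"
  have first: "(if \<forall>l\<in>set w. 1 \<le> l \<and> l \<le> 1 then f (map (\<lambda>l. l - 1) w) else 0)
      = (if \<forall>l\<in>set w. l = 1 then f ?z else 0)"
    by (auto intro!: arg_cong[where f = f] map_const_replicate simp: le_antisym)
  \<comment> \<open>in simp normal form (\<open>One_nat_def\<close> is a simp rule), so that \<open>simp\<close> can use it\<close>
  have mid: "\<forall>l\<in>set w. l \<le> Suc 0 \<Longrightarrow> map (\<lambda>l. if l = 0 then l else l - 1) w = ?z"
    by (auto intro!: map_const_replicate)
  have last: "(if \<forall>l\<in>set w. l < 1 then f w else 0) = (if \<forall>l\<in>set w. l = 0 then f ?z else 0)"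
    by (auto simp: replicate_length_same)
  show ?thesis unfolding delta_eq first last
    by (simp only: atLeastAtMost_singleton) (auto simp: mid)
qed

lemma delta_1_cong: "(\<And>d. f (replicate d 0) = g (replicate d 0)) \<Longrightarrow> delta 1 f = delta 1 g"
  by (rule ext) (simp only: delta_1_eq)

lemma delta_1_eq_szero_iff: "delta 1 f = szero \<longleftrightarrow> (\<forall>d. d \<noteq> 1 \<longrightarrow> f (replicate d 0) = 0)"
proof
  assume vanish: "delta 1 f = szero"
  show "\<forall>d. d \<noteq> 1 \<longrightarrow> f (replicate d 0) = 0"
  proof (intro allI impI)
    fix d :: nat
    assume "d \<noteq> 1"
    then consider "d = 0" | m where "d = Suc (Suc m)"
      by (metis One_nat_def not0_implies_Suc)
    then show "f (replicate d 0) = 0"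
    proof cases
      case 1
      then show ?thesis using fun_cong[OF vanish, of "[]"] delta_1_eq[of f "[]"] by (simp add: szero_def)
    next
      case 2
      then show ?thesis
        using fun_cong[OF vanish, of "1 # replicate (Suc m) 0"] delta_1_eq[of f "1 # replicate (Suc m) 0"]
        by (simp add: szero_def)
    qed
  qed
next
  assume vanish: "\<forall>d. d \<noteq> 1 \<longrightarrow> f (replicate d 0) = 0"
  show "delta 1 f = szero"
  proof
    fix w :: "nat list"
    show "delta 1 f w = szero w"
    proof (cases "length w = 1")
      case True
      then obtain a where "w = [a]" by (auto simp: length_Suc_conv)
      then show ?thesis using delta_1_eq[of f w] by (cases "a = 0 \<or> a = 1") (auto simp: szero_def)
    next
      case False
      then show ?thesis using vanish delta_1_eq[of f w] by (simp add: szero_def)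
    qed
  qed
qed

lemma delta_2_eq:
  "delta 2 f w = (if \<forall>l\<in>set w. 1 \<le> l \<and> l \<le> 2 then f (map (\<lambda>l. l - 1) w) else 0)
   - (if \<forall>l\<in>set w. l \<le> 2 then f (map (\<lambda>l. if l < 1 then l else l - 1) w) else 0)
   + (if \<forall>l\<in>set w. l \<le> 2 then f (map (\<lambda>l. if l < 2 then l else l - 1) w) else 0)
   - (if \<forall>l\<in>set w. l < 2 then f w else 0)"
proof -
  have "{1..2::nat} = {1,2}" by auto
  then show ?thesis unfolding delta_eq by simp
qed

lemma delta_2_delta_1: "delta 2 (delta 1 f) = szero"
proof
  fix w :: "nat list"
  show "delta 2 (delta 1 f) w = szero w"
  proof (cases "set w \<subseteq> {0,1,2}")
    case False
    then obtain x where "x \<in> set w" "x \<notin> {0,1,2}" by blast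
    then have "\<not> (\<forall>l\<in>set w. 1 \<le> l \<and> l \<le> 2)" "\<not> (\<forall>l\<in>set w. l \<le> 2)"
      "\<not> (\<forall>l\<in>set w. l < 2)"
      by (auto intro!: bexI[where x = x])
    then show ?thesis unfolding delta_2_eq szero_def by (simp only: if_False) simp
  next
    case True
    then have letters: "(\<forall>l\<in>set w. P l) \<longleftrightarrow>
        (0 \<in> set w \<longrightarrow> P 0) \<and> (1 \<in> set w \<longrightarrow> P 1) \<and> (2 \<in> set w \<longrightarrow> P 2)" for P
      by auto
    show ?thesis
      unfolding delta_2_eq delta_1_eq szero_def set_map ball_simps(9) length_map letters
      by (cases "0 \<in> set w"; cases "1 \<in> set w"; cases "2 \<in> set w") simp_all
  qed
qed

section \<open>Cyclic sums\<close>

definition cyc_sum :: "'k::field ser \<Rightarrow> nat list \<Rightarrow> 'k" where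
  "cyc_sum f w = (\<Sum>i<length w. f (rotate i w))"

lemma sum_lessThan_shift_mod:
  fixes g :: "nat \<Rightarrow> 'a::comm_monoid_add"
  assumes "0 < d"
  shows "(\<Sum>i<d. g ((i + t) mod d)) = (\<Sum>i<d. g i)"
proof (induct t arbitrary: g)
  case 0
  then show ?case using assms by (intro sum.cong) auto
next
  case (Suc t)
  obtain m where d: "d = Suc m" using assms by (cases d) auto
  let ?h = "\<lambda>i. g ((i + t) mod d)"
  have "(\<Sum>i<d. g ((i + Suc t) mod d)) = (\<Sum>i<d. ?h ((i + 1) mod d))"
    by (intro sum.cong refl) (simp add: mod_add_left_eq)
  also have "\<dots> = (\<Sum>i<m. ?h (Suc i)) + ?h 0"
    unfolding d sum.lessThan_Suc by (simp add: mod_Suc)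
  also have "\<dots> = (\<Sum>i<d. ?h i)"
    unfolding d sum.lessThan_Suc_shift by (rule add.commute)
  also have "\<dots> = (\<Sum>i<d. g i)" by (rule Suc)
  finally show ?case .
qed

lemma cyc_sum_rotate: "cyc_sum f (rotate t w) = cyc_sum f w"
proof (cases "w = []")
  case False
  then have "cyc_sum f (rotate t w) = (\<Sum>i<length w. f (rotate ((i + t) mod length w) w))"
    unfolding cyc_sum_def by (auto intro!: sum.cong simp: rotate_rotate rotate_conv_mod[symmetric])
  also have "\<dots> = cyc_sum f w"
    unfolding cyc_sum_def using sum_lessThan_shift_mod[of "length w" "\<lambda>i. f (rotate i w)" t] False
    by simp
  finally show ?thesis .
qed (simp add: cyc_sum_def)

lemma take_drop_rotate:
  assumes "j \<le> length w"
  shows "take (length w - j) (rotate j w) = drop j w" "drop (length w - j) (rotate j w) = take j w"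
proof -
  have "rotate j w = drop j w @ take j w"
    using assms by (cases "j = length w") (simp_all add: rotate_drop_take)
  then show "take (length w - j) (rotate j w) = drop j w" "drop (length w - j) (rotate j w) = take j w"
    using assms by simp_all
qed

text \<open>Cutting the rotations of \<open>w\<close> at position \<open>j\<close> is the same as cutting them at
  \<open>length w - j\<close> and swapping the two pieces.\<close>
lemma cyc_sum_smul_commute: "cyc_sum (smul a b) w = cyc_sum (smul b a) w"
proof (cases "w = []")
  case False
  let ?d = "length w"
  let ?F = "\<lambda>i j. a (take j (rotate i w)) * b (drop j (rotate i w))"
  let ?G = "\<lambda>i j. b (take j (rotate i w)) * a (drop j (rotate i w))"
  have "cyc_sum (smul a b) w = (\<Sum>i<?d. \<Sum>j\<le>?d. ?F i j)"
    by (simp add: cyc_sum_def smul_def)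
  also have "\<dots> = (\<Sum>j\<le>?d. \<Sum>i<?d. ?F i j)"
    by (rule sum.swap)
  also have "\<dots> = (\<Sum>j\<le>?d. \<Sum>i<?d. ?G i (?d - j))"
  proof (rule sum.cong[OF refl])
    fix j assume j: "j \<in> {..?d}"
    have "(\<Sum>i<?d. ?G i (?d - j)) = (\<Sum>i<?d. ?G ((i + j) mod ?d) (?d - j))"
      using sum_lessThan_shift_mod[of ?d "\<lambda>i. ?G i (?d - j)" j] False by simp
    also have "\<dots> = (\<Sum>i<?d. ?F i j)"
    proof (intro sum.cong refl)
      fix i
      have "rotate ((i + j) mod ?d) w = rotate j (rotate i w)"
        by (simp add: rotate_rotate rotate_conv_mod[symmetric] add.commute)
      then show "?G ((i + j) mod ?d) (?d - j) = ?F i j"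
        using take_drop_rotate[of j "rotate i w"] j by (simp add: mult.commute)
    qed
    finally show "(\<Sum>i<?d. ?F i j) = (\<Sum>i<?d. ?G i (?d - j))" by simp
  qed
  also have "\<dots> = (\<Sum>j\<le>?d. \<Sum>i<?d. ?G i j)"
    by (rule sum.reindex_bij_witness[where i = "\<lambda>j. ?d - j" and j = "\<lambda>j. ?d - j"]) auto
  also have "\<dots> = (\<Sum>i<?d. \<Sum>j\<le>?d. ?G i j)"
    by (rule sum.swap)
  also have "\<dots> = cyc_sum (smul b a) w"
    by (simp add: cyc_sum_def smul_def)
  finally show ?thesis .
qed (simp add: cyc_sum_def)

lemma cyc_sum_sadd [simp]: "cyc_sum (sadd f g) w = cyc_sum f w + cyc_sum g w"
  by (simp add: cyc_sum_def sadd_def sum.distrib)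

lemma cyc_sum_ssub [simp]: "cyc_sum (ssub f g) w = cyc_sum f w - cyc_sum g w"
  by (simp add: cyc_sum_def ssub_def sum_subtractf)

lemma cyc_sum_ssmult [simp]: "cyc_sum (ssmult c f) w = c * cyc_sum f w"
  by (simp add: cyc_sum_def ssmult_def sum_distrib_left)

lemma cyc_sum_szero [simp]: "cyc_sum szero w = 0"
  by (simp add: cyc_sum_def szero_def)

lemma cyc_sum_sbracket [simp]: "cyc_sum (sbracket a b) w = 0"
  by (simp add: sbracket_def cyc_sum_smul_commute)

lemma cyc_sum_comm_span: "s \<in> comm_span n \<Longrightarrow> cyc_sum s w = 0"
  by (induct rule: comm_span.induct) simp_all

lemma cyc_sum_replicate: "cyc_sum f (replicate d a) = of_nat d * f (replicate d a)"
  by (simp add: cyc_sum_def)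

lemma cyc_sum_replicate_eq_0_iff:
  fixes f :: "'k::field_char_0 ser"
  assumes "0 < d"
  shows "cyc_sum f (replicate d a) = 0 \<longleftrightarrow> f (replicate d a) = 0"
  using assms by (simp add: cyc_sum_replicate)

lemma ass_cyc_sum: "ass n f \<Longrightarrow> ass n (cyc_sum f)"
  by (simp add: ass_def cyc_sum_def)

lemma cyc_sum_letterwise:
  "cyc_sum (\<lambda>v. if \<forall>l\<in>set v. P l then f (map p v) else 0) w
     = (if \<forall>l\<in>set w. P l then cyc_sum f (map p w) else 0)"
  by (cases "\<forall>l\<in>set w. P l") (auto simp: cyc_sum_def rotate_map intro!: sum.neutral)

lemma cyc_sum_delta: "cyc_sum (delta n f) w = delta n (cyc_sum f) w"
proof -
  let ?A = "\<lambda>g v. if \<forall>l\<in>set v. 1 \<le> l \<and> l \<le> n then g (map (\<lambda>l. l - 1) v) else 0"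
  let ?B = "\<lambda>g i v. if \<forall>l\<in>set v. l \<le> n then g (map (\<lambda>l. if l < i then l else l - 1) v) else 0"
  let ?C = "\<lambda>g v. if \<forall>l\<in>set v. l < n then g (map id v) else 0"
  have delta_ABC: "delta n g v = ?A g v + (\<Sum>i=1..n. (-1) ^ i * ?B g i v) + (-1) ^ (n + 1) * ?C g v"
    for g :: "'a ser" and v
    unfolding delta_eq by simp
  have "(\<Sum>r<length w. \<Sum>i=1..n. (-1) ^ i * ?B f i (rotate r w))
      = (\<Sum>i=1..n. (-1) ^ i * cyc_sum (?B f i) w)"
    unfolding cyc_sum_def sum_distrib_left by (rule sum.swap)
  then have "cyc_sum (delta n f) w
      = cyc_sum (?A f) w + (\<Sum>i=1..n. (-1) ^ i * cyc_sum (?B f i) w) + (-1) ^ (n + 1) * cyc_sum (?C f) w"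
    unfolding cyc_sum_def[of "delta n f"] delta_ABC sum.distrib
    by (simp add: cyc_sum_def sum_distrib_left)
  also have "\<dots> = delta n (cyc_sum f) w"
    unfolding delta_ABC cyc_sum_letterwise ..
  finally show ?thesis .
qed

section \<open>Traces are detected by cyclic sums\<close>

lemma comm_span_nil: "s \<in> comm_span n \<Longrightarrow> s [] = 0"
  by (induct rule: comm_span.induct)
    (simp_all add: sbracket_def ssub_def smul_def szero_def sadd_def ssmult_def)

definition word_series :: "nat list \<Rightarrow> 'k::field ser" where
  "word_series a = (\<lambda>v. if v = a then 1 else 0)"

lemma smul_word_series: "smul (word_series a) (word_series b) = (word_series (a @ b) :: 'k::field ser)"
proof
  fix v
  have "smul (word_series a) (word_series b) v
      = (\<Sum>k\<le>length v. if k = length a \<and> v = a @ b then 1 else (0::'k))"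
    unfolding smul_def word_series_def
  proof (rule sum.cong[OF refl])
    fix k assume "k \<in> {..length v}"
    then have "(take k v = a \<and> drop k v = b) \<longleftrightarrow> (k = length a \<and> v = a @ b)"
      by (auto simp: append_eq_conv_conj)
    then show "(if take k v = a then 1 else 0) * (if drop k v = b then 1 else 0) =
        (if k = length a \<and> v = a @ b then 1 else (0::'k))"
      by auto
  qed
  also have "\<dots> = word_series (a @ b) v"
    by (simp add: word_series_def sum.delta)
  finally show "smul (word_series a) (word_series b) v = (word_series (a @ b) v :: 'k)" .
qed

lemma word_series_sub_rotate_in_comm_span:
  assumes "set w \<subseteq> {..<n}"
  shows "ssub (word_series w) (word_series (rotate i w)) \<in> comm_span n"
proof -
  define j where "j = i mod length w"
  have "rotate i w = drop j w @ take j w"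
    by (cases "w = []") (simp_all add: j_def rotate_drop_take)
  then have "ssub (word_series w) (word_series (rotate i w))
      = sbracket (word_series (take j w)) (word_series (drop j w))"
    by (simp add: sbracket_def smul_word_series)
  also have "\<dots> \<in> comm_span n"
    using assms by (intro comm_span.cs_comm) (auto simp: ass_def word_series_def dest: in_set_takeD in_set_dropD)
  finally show ?thesis .
qed

lemma comm_span_sum:
  "finite A \<Longrightarrow> (\<And>x. x \<in> A \<Longrightarrow> F x \<in> comm_span n) \<Longrightarrow> (\<lambda>v. \<Sum>x\<in>A. F x v) \<in> comm_span n"
proof (induct rule: finite_induct)
  case empty
  then show ?case using comm_span.cs_zero by (simp add: szero_def)
next
  case (insert a A)
  then have "sadd (F a) (\<lambda>v. \<Sum>x\<in>A. F x v) \<in> comm_span n"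
    by (auto intro: comm_span.cs_add)
  then show ?case using insert by (simp add: sadd_def)
qed

lemma rotate_diff_eq_iff:
  assumes "length w = length v" "i < length v"
  shows "v = rotate (length w - i) w \<longleftrightarrow> w = rotate i v"
proof
  assume "v = rotate (length w - i) w"
  then have "rotate i v = rotate (i + (length w - i)) w" by (simp add: rotate_rotate)
  then show "w = rotate i v" using assms by simp
next
  assume "w = rotate i v"
  then have "rotate (length w - i) w = rotate ((length w - i) + i) v" by (simp add: rotate_rotate)
  then show "v = rotate (length w - i) w" using assms by simp
qed

lemma comm_closed_cyc_sum:
  assumes "comm_closed n h"
  shows "h [] = 0" "cyc_sum h w = 0"
proof -
  obtain s where s: "s \<in> comm_span n" "\<forall>v. length v < Suc (length w) \<longrightarrow> h v = s v"
    using assms unfolding comm_closed_def by blast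
  then show "h [] = 0" using comm_span_nil by auto
  have "cyc_sum h w = cyc_sum s w" unfolding cyc_sum_def using s(2) by (intro sum.cong) auto
  then show "cyc_sum h w = 0" using cyc_sum_comm_span[OF s(1)] by simp
qed

lemma sum_over_rotations:
  assumes "finite W" "\<And>i v. rotate i v \<in> W \<longleftrightarrow> v \<in> W"
  shows "(\<Sum>w\<in>W. \<Sum>i<length w. if v = rotate (length w - i) w then c w else 0)
       = (if v \<in> W then \<Sum>i<length v. c (rotate i v) else 0)"
proof -
  have "(\<Sum>w\<in>W. \<Sum>i<length w. if v = rotate (length w - i) w then c w else 0)
      = (\<Sum>w\<in>W. \<Sum>i<length v. if w = rotate i v then c (rotate i v) else 0)"
  proof (rule sum.cong[OF refl])
    fix w
    show "(\<Sum>i<length w. if v = rotate (length w - i) w then c w else 0)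
        = (\<Sum>i<length v. if w = rotate i v then c (rotate i v) else 0)"
    proof (cases "length w = length v")
      case True
      then show ?thesis using rotate_diff_eq_iff[OF True] by (intro sum.cong) auto
    next
      case False
      then have "v \<noteq> rotate k w" "w \<noteq> rotate k v" for k by auto
      then show ?thesis by simp
    qed
  qed
  also have "\<dots> = (\<Sum>i<length v. \<Sum>w\<in>W. if w = rotate i v then c (rotate i v) else 0)"
    by (rule sum.swap)
  also have "\<dots> = (if v \<in> W then \<Sum>i<length v. c (rotate i v) else 0)"
    using assms by (cases "v \<in> W") (simp_all add: sum.delta)
  finally show ?thesis .
qed

text \<open>Up to length \<open>N\<close>, \<open>h\<close> agrees with the combination of commutators
  \<open>\<Sum>\<^sub>w \<Sum>\<^sub>i h w / |w| \<cdot> (w - rotate i w)\<close>: the two differ at \<open>v\<close> by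
  \<open>cyc_sum h v / |v|\<close>.\<close>
lemma comm_closed_if_cyc_sum:
  fixes h :: "'k::field_char_0 ser"
  assumes "ass n h" "h [] = 0" "\<And>w. cyc_sum h w = 0"
  shows "comm_closed n h"
  unfolding comm_closed_def
proof (intro conjI allI assms(1))
  fix N
  define W where "W = {w. set w \<subseteq> {..<n} \<and> length w \<le> N \<and> w \<noteq> []}"
  define c where "c w = h w / of_nat (length w)" for w
  define s where "s v = (\<Sum>w\<in>W. \<Sum>i<length w.
      c w * ssub (word_series w) (word_series (rotate (length w - i) w)) v)" for v
  have "finite W"
    by (rule finite_subset[OF _ finite_lists_length_le[of "{..<n}" N]]) (auto simp: W_def)
  have "s \<in> comm_span n"
    unfolding s_def[abs_def] using \<open>finite W\<close>
    by (intro comm_span_sum finite_lessThan comm_span.cs_smult[unfolded ssmult_def]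
        word_series_sub_rotate_in_comm_span) (auto simp: W_def)
  moreover have "s v = (if v \<in> W then h v else 0)" for v
  proof -
    have "c w * ssub (word_series w) (word_series u) v
        = (if v = w then c w else 0) - (if v = u then c w else 0)" for w u
      by (simp add: ssub_def word_series_def right_diff_distrib)
    then have "s v = (\<Sum>w\<in>W. \<Sum>i<length w. if v = w then c w else 0)
        - (\<Sum>w\<in>W. \<Sum>i<length w. if v = rotate (length w - i) w then c w else 0)"
      unfolding s_def by (simp add: sum_subtractf)
    also have "(\<Sum>w\<in>W. \<Sum>i<length w. if v = w then c w else 0) = (\<Sum>w\<in>W. if v = w then h w else 0)"
      by (intro sum.cong refl) (auto simp: W_def c_def)
    also have "\<dots> = (if v \<in> W then h v else 0)"
      using \<open>finite W\<close> by (simp add: sum.delta)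
    also have "(\<Sum>w\<in>W. \<Sum>i<length w. if v = rotate (length w - i) w then c w else 0)
        = (if v \<in> W then cyc_sum h v / of_nat (length v) else 0)"
      using \<open>finite W\<close>
      by (subst sum_over_rotations) (auto simp: W_def c_def cyc_sum_def sum_divide_distrib)
    finally show ?thesis using assms(3) by simp
  qed
  ultimately show "\<exists>s\<in>comm_span n. \<forall>w. length w < N \<longrightarrow> h w = s w"
    using assms(1,2) by (intro bexI[of _ s]) (auto simp: W_def ass_def)
qed

lemma comm_closed_iff_cyc_sum:
  fixes h :: "'k::field_char_0 ser"
  shows "comm_closed n h \<longleftrightarrow> ass n h \<and> h [] = 0 \<and> (\<forall>w. cyc_sum h w = 0)"
  using comm_closed_cyc_sum comm_closed_if_cyc_sum by (metis comm_closed_def)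

lemma comm_closed_szero: "comm_closed n szero"
  unfolding comm_closed_def using comm_span.cs_zero by (auto simp: ass_szero)

lemma comm_closed_1_iff:
  fixes h :: "'k::field_char_0 ser"
  shows "comm_closed 1 h \<longleftrightarrow> h = szero"
proof
  assume closed: "comm_closed 1 h"
  have "h (replicate d 0) = 0" for d
    using comm_closed_cyc_sum[OF closed] cyc_sum_replicate_eq_0_iff[of d h 0]
    by (cases d) auto
  then show "h = szero"
    using closed by (intro ass_1_ext) (auto simp: comm_closed_def ass_def szero_def)
qed (simp add: comm_closed_szero)

lemma cyc_sum_gen:
  assumes "length w \<noteq> 1"
  shows "cyc_sum (gen i) w = 0"
proof -
  have "rotate j w \<noteq> [i]" for j
  proof
    assume "rotate j w = [i]"
    then have "length (rotate j w) = 1" by simp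
    then show False using assms by simp
  qed
  then show ?thesis by (simp add: cyc_sum_def gen_def)
qed

lemma lie_poly_cyc_sum: "f \<in> lie_poly n \<Longrightarrow> length w \<noteq> 1 \<Longrightarrow> cyc_sum f w = 0"
  by (induct rule: lie_poly.induct) (simp_all add: cyc_sum_gen)

lemma lie_cyc_sum:
  assumes "lie n f" "length w \<noteq> 1"
  shows "cyc_sum f w = 0"
proof -
  have "cyc_sum f w = cyc_sum (hom (length w) f) w" by (simp add: cyc_sum_def hom_def)
  also have "\<dots> = 0" using assms by (intro lie_poly_cyc_sum) (auto simp: lie_def)
  finally show ?thesis .
qed

lemma lie_antisym_length_2: "lie n f \<Longrightarrow> f [b, a] = - f [a, b]"
  using lie_cyc_sum[of n f "[a, b]"]
  by (simp add: cyc_sum_def numeral_2_eq_2 eq_neg_iff_add_eq_0 add.commute)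

lemma lie_poly_nil: "f \<in> lie_poly n \<Longrightarrow> f [] = 0"
  by (induct rule: lie_poly.induct)
    (simp_all add: gen_def sbracket_def ssub_def smul_def szero_def sadd_def ssmult_def)

lemma lie_nil:
  assumes "lie n f"
  shows "f [] = 0"
proof -
  have "hom 0 f [] = 0" using assms by (intro lie_poly_nil[of _ n]) (simp add: lie_def)
  then show ?thesis by (simp add: hom_def)
qed

lemma lie_szero: "lie n szero"
  using lie_poly.lp_zero[of n, unfolded szero_def] by (simp add: lie_def ass_def hom_def szero_def)

lemma gen_eq_word_series: "gen i = word_series [i]"
  by (simp add: gen_def word_series_def)

lemma sbracket_gen_gen:
  "sbracket (gen i) (gen j) w = (if w = [i, j] then 1 else 0) - (if w = [j, i] then 1 else 0)"
  unfolding sbracket_def ssub_def gen_eq_word_series smul_word_series by (simp add: word_series_def)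

lemma lie_2_bracket: "lie 2 (sbracket (gen 0) (gen 1) :: 'k::field ser)"
  unfolding lie_def
proof (intro conjI allI)
  show "ass 2 (sbracket (gen 0) (gen 1) :: 'k ser)" by (auto simp: ass_def sbracket_gen_gen)
  fix d
  show "hom d (sbracket (gen 0) (gen 1) :: 'k ser) \<in> lie_poly 2"
  proof (cases "d = 2")
    case True
    then have "hom d (sbracket (gen 0) (gen 1)) = (sbracket (gen 0) (gen 1) :: 'k ser)"
      by (auto simp: fun_eq_iff hom_def sbracket_gen_gen)
    then show ?thesis by (auto intro!: lie_poly.intros)
  next
    case False
    then have "hom d (sbracket (gen 0) (gen 1)) = (szero :: 'k ser)"
      by (auto simp: fun_eq_iff hom_def sbracket_gen_gen szero_def)
    then show ?thesis by (simp add: lie_poly.lp_zero)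
  qed
qed

lemma delta_2_bracket: "delta 2 (sbracket (gen 0) (gen 1)) = (szero :: 'k::field ser)"
proof
  fix w :: "nat list"
  show "delta 2 (sbracket (gen 0) (gen 1)) w = (szero w :: 'k)"
  proof (cases "length w = 2")
    case False
    then have "length (map q w) \<noteq> 2" "length w \<noteq> 2" for q :: "nat \<Rightarrow> nat" by simp_all
    then have "map q w \<noteq> [0, 1] \<and> map q w \<noteq> [1, 0]" "w \<noteq> [0, 1] \<and> w \<noteq> [1, 0]"
      for q :: "nat \<Rightarrow> nat"
      by fastforce+
    then show ?thesis by (simp add: delta_2_eq sbracket_gen_gen szero_def)
  next
    case True
    then obtain a b where w: "w = [a, b]"
      by (auto simp: numeral_2_eq_2 length_Suc_conv)
    have "a = 0 \<or> a = 1 \<or> a = 2 \<or> a > 2" "b = 0 \<or> b = 1 \<or> b = 2 \<or> b > 2" by arith+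
    then show ?thesis unfolding w delta_2_eq sbracket_gen_gen szero_def
      by (elim disjE) simp_all
  qed
qed

lemma lie_1_delta:
  fixes f :: "'k::field_char_0 ser"
  assumes "lie 1 f"
  shows "delta 1 f = szero"
  unfolding delta_1_eq_szero_iff
proof (intro allI impI)
  fix d :: nat
  assume "d \<noteq> 1"
  then show "f (replicate d 0) = 0"
    using lie_nil[OF assms] lie_cyc_sum[OF assms] cyc_sum_replicate_eq_0_iff[of d f 0]
    by (cases d) auto
qed

lemma comm_closed_delta_1_iff_cyc_sum:
  fixes f :: "'k::field_char_0 ser"
  assumes "ass_pos 1 f"
  shows "comm_closed 2 (delta 1 f) \<longleftrightarrow> delta 1 (cyc_sum f) = szero"
proof -
  have "ass 2 (delta 1 f)" using ass_Suc_delta[of 1 f] by (simp add: numeral_2_eq_2)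
  moreover have "delta 1 f [] = 0" using assms delta_1_eq[of f "[]"] by (simp add: ass_pos_def)
  ultimately show ?thesis by (simp add: comm_closed_iff_cyc_sum cyc_sum_delta fun_eq_iff szero_def)
qed

lemma comm_closed_delta_1_iff:
  fixes f :: "'k::field_char_0 ser"
  assumes f: "ass_pos 1 f"
  shows "comm_closed 2 (delta 1 f) \<longleftrightarrow> (\<exists>c. comm_closed 1 (ssub f (ssmult c (gen 0))))"
proof -
  have "comm_closed 2 (delta 1 f) \<longleftrightarrow> (\<forall>d. d \<noteq> 1 \<longrightarrow> f (replicate d 0) = 0)"
    unfolding comm_closed_delta_1_iff_cyc_sum[OF f] delta_1_eq_szero_iff
  proof (intro all_cong imp_cong refl)
    fix d :: nat
    show "cyc_sum f (replicate d 0) = 0 \<longleftrightarrow> f (replicate d 0) = 0"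
      using f cyc_sum_replicate_eq_0_iff[of d f 0] by (cases d) (auto simp: ass_pos_def cyc_sum_def)
  qed
  also have "\<dots> \<longleftrightarrow> (\<exists>c. f = ssmult c (gen 0))"
  proof
    assume vanish: "\<forall>d. d \<noteq> 1 \<longrightarrow> f (replicate d 0) = 0"
    have "f = ssmult (f [0]) (gen 0)"
    proof (rule ass_1_ext)
      fix d :: nat
      show "f (replicate d 0) = ssmult (f [0]) (gen 0) (replicate d 0)"
        using vanish by (cases "d = 1") (simp_all add: ssmult_def gen_def replicate_eq_singleton_iff)
    next
      show "ass 1 f" using f by (simp add: ass_pos_def)
      show "ass 1 (ssmult (f [0]) (gen 0))" by (simp add: ass_def ssmult_def gen_def)
    qed
    then show "\<exists>c. f = ssmult c (gen 0)" ..
  next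
    assume "\<exists>c. f = ssmult c (gen 0)"
    then show "\<forall>d. d \<noteq> 1 \<longrightarrow> f (replicate d 0) = 0"
      by (auto simp: ssmult_def gen_def replicate_eq_singleton_iff)
  qed
  also have "\<dots> \<longleftrightarrow> (\<exists>c. comm_closed 1 (ssub f (ssmult c (gen 0))))"
    unfolding comm_closed_1_iff ssub_eq_szero_iff ..
  finally show ?thesis .
qed

section \<open>Cocycles on two letters\<close>

lemma cocycle_replicate:
  assumes cocycle: "delta 2 F = szero" and "0 < d"
  shows "F (replicate d 0) = 0" "F (replicate d 1) = 0"
proof -
  have "delta 2 F (replicate d 0) = 0" "delta 2 F (replicate d 2) = 0"
    using cocycle by (simp_all add: szero_def)
  moreover have "map (\<lambda>l. l - 1) (replicate d (2::nat)) = replicate d 1"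
    "map (\<lambda>l. if l < 1 then l else l - 1) (replicate d (2::nat)) = replicate d 1"
    "map (\<lambda>l. if l < 2 then l else l - 1) (replicate d (2::nat)) = replicate d 1"
    by simp_all
  ultimately show "F (replicate d 0) = 0" "F (replicate d 1) = 0"
    using \<open>0 < d\<close> unfolding delta_2_eq by simp_all
qed

text \<open>Evaluating \<open>\<delta>F = 0\<close> at the word \<open>u + v\<close> (letters \<open>0, 1, 2\<close>), only the two
  middle terms survive, and they are \<open>F u\<close> and \<open>F v\<close>.\<close>
lemma cocycle_eq_if_le:
  assumes cocycle: "delta 2 F = szero"
    and u: "set u \<subseteq> {0,1}" and v: "set v \<subseteq> {0,1}" and len: "length u = length v"
    and le: "\<And>t. t < length u \<Longrightarrow> u ! t \<le> v ! t" and "1 \<in> set u" "0 \<in> set v"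
  shows "F u = F v"
proof -
  define w where "w = map (\<lambda>t. u ! t + v ! t) [0..<length u]"
  have len_w: "length w = length u" by (simp add: w_def)
  have w_nth: "w ! t = u ! t + v ! t" if "t < length u" for t using that by (simp add: w_def)
  have u01: "u ! t = 0 \<or> u ! t = 1" if "t < length u" for t using that u nth_mem by fastforce
  have v01: "v ! t = 0 \<or> v ! t = 1" if "t < length u" for t using that v nth_mem len by fastforce
  obtain t1 where t1: "t1 < length u" "u ! t1 = 1" using \<open>1 \<in> set u\<close> by (auto simp: in_set_conv_nth)
  have "v ! t1 = 1" using le t1 v01[OF t1(1)] by fastforce
  then have two: "2 \<in> set w" using t1 w_nth len_w by (metis in_set_conv_nth one_add_one)
  obtain t0 where t0: "t0 < length u" "v ! t0 = 0" using \<open>0 \<in> set v\<close> len by (auto simp: in_set_conv_nth)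
  have "u ! t0 = 0" using le t0 by fastforce
  then have zero: "0 \<in> set w" using t0 w_nth len_w by (metis in_set_conv_nth add_0)
  have le2: "\<forall>l\<in>set w. l \<le> 2"
  proof
    fix l assume "l \<in> set w"
    then obtain t where "t < length u" "l = w ! t" using len_w by (auto simp: in_set_conv_nth)
    then show "l \<le> 2" using w_nth u01 v01 by fastforce
  qed
  have not_first: "\<not> (\<forall>l\<in>set w. 1 \<le> l \<and> l \<le> 2)" using zero by fastforce
  have not_last: "\<not> (\<forall>l\<in>set w. l < 2)" using two by fastforce
  have merge_1: "map (\<lambda>l. if l < 1 then l else l - 1) w = u"
  proof (rule nth_equalityI)
    fix t assume "t < length (map (\<lambda>l. if l < 1 then l else l - 1) w)"
    then have t: "t < length u" using len_w by simp
    show "map (\<lambda>l. if l < 1 then l else l - 1) w ! t = u ! t"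
      using t w_nth[OF t] u01[OF t] v01[OF t] le len_w by fastforce
  qed (simp add: len_w)
  have merge_2: "map (\<lambda>l. if l < 2 then l else l - 1) w = v"
  proof (rule nth_equalityI)
    fix t assume "t < length (map (\<lambda>l. if l < 2 then l else l - 1) w)"
    then have t: "t < length u" using len_w by simp
    show "map (\<lambda>l. if l < 2 then l else l - 1) w ! t = v ! t"
      using t w_nth[OF t] u01[OF t] v01[OF t] le len_w by fastforce
  qed (simp add: len_w len)
  have "delta 2 F w = 0" using cocycle by (simp add: szero_def)
  then show ?thesis
    unfolding delta_2_eq if_not_P[OF not_first] if_not_P[OF not_last] if_P[OF le2] merge_1 merge_2
    by simp
qed

definition one_at :: "nat \<Rightarrow> nat \<Rightarrow> nat list" where
  "one_at d t = (replicate d 0)[t := 1]"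

definition zero_at :: "nat \<Rightarrow> nat \<Rightarrow> nat list" where
  "zero_at d s = (replicate d 1)[s := 0]"

lemma length_one_at [simp]: "length (one_at d t) = d"
  by (simp add: one_at_def)

lemma nth_one_at: "k < d \<Longrightarrow> one_at d t ! k = (if k = t then 1 else 0)"
  by (simp add: one_at_def nth_list_update)

lemma set_one_at: "set (one_at d t) \<subseteq> {0,1}"
  unfolding one_at_def by (rule order_trans[OF set_update_subset_insert]) auto

lemma length_zero_at [simp]: "length (zero_at d s) = d"
  by (simp add: zero_at_def)

lemma nth_zero_at: "k < d \<Longrightarrow> zero_at d s ! k = (if k = s then 0 else 1)"
  by (simp add: zero_at_def nth_list_update)

lemma set_zero_at: "set (zero_at d s) \<subseteq> {0,1}"
  unfolding zero_at_def by (rule order_trans[OF set_update_subset_insert]) auto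

lemma in_set_one_at:
  assumes "t < d"
  shows "1 \<in> set (one_at d t)" "k < d \<Longrightarrow> k \<noteq> t \<Longrightarrow> 0 \<in> set (one_at d t)"
  using assms by (metis length_one_at nth_one_at nth_mem)+

lemma zero_in_set_zero_at: "s < d \<Longrightarrow> 0 \<in> set (zero_at d s)"
  by (metis length_zero_at nth_zero_at nth_mem)

lemma rotate_one_at: "t < d \<Longrightarrow> rotate t (one_at d t) = one_at d 0"
proof (rule nth_equalityI)
  fix k assume "t < d" "k < length (rotate t (one_at d t))"
  then have "k < d" "(t + k) mod d < d" by simp_all
  moreover have "(t + k) mod d = t \<longleftrightarrow> k = 0"
    using \<open>t < d\<close> \<open>k < d\<close> by (auto simp: mod_if)
  ultimately show "rotate t (one_at d t) ! k = one_at d 0 ! k"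
    by (simp add: nth_rotate nth_one_at)
qed simp

lemma binary_word_cases:
  assumes "set u \<subseteq> {0,1}"
  obtains "u = replicate (length u) 0" | "u = replicate (length u) 1" | "0 \<in> set u" "1 \<in> set u"
proof -
  consider "1 \<notin> set u" | "0 \<notin> set u" | "0 \<in> set u" "1 \<in> set u" by blast
  then show thesis
  proof cases
    case 1
    then have "\<forall>y\<in>set u. y = 0" using assms by auto
    then show thesis using that(1) by (simp add: replicate_length_same)
  next
    case 2
    then have "\<forall>y\<in>set u. y = 1" using assms by auto
    then show thesis using that(2) by (simp add: replicate_length_same)
  qed (rule that(3))
qed

lemma cocycle_eq_one_at:
  assumes cocycle: "delta 2 F = szero"
    and u: "set u \<subseteq> {0,1}" "0 \<in> set u" and t: "t < length u" "u ! t = 1"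
  shows "F u = F (one_at (length u) t)"
  using cocycle set_one_at u t in_set_one_at(1)[OF t(1)]
  by (intro cocycle_eq_if_le[symmetric]) (auto simp: nth_one_at)

text \<open>Two \<open>one_at\<close> words are linked through a \<open>zero_at\<close> word above both; this needs
  a third position.\<close>
lemma cocycle_mixed_eq:
  assumes cocycle: "delta 2 F = szero"
    and u: "set u \<subseteq> {0,1}" "0 \<in> set u" "1 \<in> set u" and len: "3 \<le> length u"
  shows "F u = F (one_at (length u) 0)"
proof -
  let ?d = "length u"
  obtain t where t: "t < ?d" "u ! t = 1" using u(3) by (auto simp: in_set_conv_nth)
  define s where "s = (if t = 1 then 2 else (1::nat))"
  have s: "s < ?d" "s \<noteq> t" "s \<noteq> 0" using len by (auto simp: s_def)
  have "0 < ?d" using len by linarith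
  have "F u = F (one_at ?d t)" by (rule cocycle_eq_one_at[OF cocycle u(1,2) t])
  also have "\<dots> = F (zero_at ?d s)"
    using t s in_set_one_at(1)[OF t(1)] zero_in_set_zero_at[OF s(1)]
    by (intro cocycle_eq_if_le[OF cocycle set_one_at set_zero_at]) (auto simp: nth_one_at nth_zero_at)
  also have "\<dots> = F (one_at ?d 0)"
    using t s in_set_one_at(1)[of 0 ?d] zero_in_set_zero_at[OF s(1)] \<open>0 < ?d\<close>
    by (intro cocycle_eq_if_le[OF cocycle set_one_at set_zero_at, symmetric])
      (auto simp: nth_one_at nth_zero_at)
  finally show ?thesis .
qed

lemma cyclic_cocycle_mixed_eq:
  assumes cocycle: "delta 2 F = szero" and cyclic: "\<And>t w. F (rotate t w) = F w"
    and u: "set u \<subseteq> {0,1}" "0 \<in> set u" "1 \<in> set u"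
  shows "F u = F (one_at (length u) 0)"
proof -
  obtain t where t: "t < length u" "u ! t = 1" using u(3) by (auto simp: in_set_conv_nth)
  have "F u = F (one_at (length u) t)" by (rule cocycle_eq_one_at[OF cocycle u(1,2) t])
  also have "\<dots> = F (rotate t (one_at (length u) t))" by (simp add: cyclic)
  also have "\<dots> = F (one_at (length u) 0)" using t by (simp add: rotate_one_at)
  finally show ?thesis .
qed

text \<open>Since \<open>\<delta>\<close> on one letter only reads the coefficients of the powers of \<open>x\<close>, the
  primitive need only be prescribed on those words.\<close>
lemma cyclic_cocycle_eq_delta_1:
  assumes cocycle: "delta 2 F = szero" and cyclic: "\<And>t w. F (rotate t w) = F w"
    and "ass 2 F" "F [] = 0"
  shows "F = delta 1 (\<lambda>w. if w = [] then 0 else - F (one_at (length w) 0))"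
proof
  fix u :: "nat list"
  let ?G = "\<lambda>w. if w = [] then 0 else - F (one_at (length w) 0)"
  show "F u = delta 1 ?G u"
  proof (cases "set u \<subseteq> {0,1}")
    case False
    then obtain x where "x \<in> set u" "x \<notin> {0, 1}" by blast
    then have "\<not> set u \<subseteq> {..<2}" and c1: "\<not> (\<forall>l\<in>set u. l = 1)"
      and c2: "\<not> (\<forall>l\<in>set u. l \<le> 1)" and c3: "\<not> (\<forall>l\<in>set u. l = 0)"
      by (auto intro!: bexI[where x = x])
    then show ?thesis using \<open>ass 2 F\<close>
      unfolding ass_def delta_1_eq if_not_P[OF c1] if_not_P[OF c2] if_not_P[OF c3] by simp
  next
    case binary: True
    show ?thesis
    proof (cases rule: binary_word_cases[OF binary])
      case 1
      show ?thesis
      proof (cases "u = []")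
        case False
        then have c1: "\<not> (\<forall>l\<in>set u. l = 1)" and c2: "\<forall>l\<in>set u. l \<le> 1"
          and c3: "\<forall>l\<in>set u. l = 0"
          by (subst 1; simp)+
        have "F u = 0" using cocycle_replicate(1)[OF cocycle, of "length u"] 1 False by simp
        then show ?thesis unfolding delta_1_eq if_not_P[OF c1] if_P[OF c2] if_P[OF c3] by simp
      qed (unfold delta_1_eq, simp add: \<open>F [] = 0\<close>)
    next
      case 2
      show ?thesis
      proof (cases "u = []")
        case False
        then have c1: "\<forall>l\<in>set u. l = 1" and c2: "\<forall>l\<in>set u. l \<le> 1"
          and c3: "\<not> (\<forall>l\<in>set u. l = 0)"
          by (subst 2; simp)+
        have "F u = 0" using cocycle_replicate(2)[OF cocycle, of "length u"] 2 False by simp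
        then show ?thesis unfolding delta_1_eq if_P[OF c1] if_P[OF c2] if_not_P[OF c3] by simp
      qed (unfold delta_1_eq, simp add: \<open>F [] = 0\<close>)
    next
      case 3
      then have c1: "\<not> (\<forall>l\<in>set u. l = 1)" and c2: "\<forall>l\<in>set u. l \<le> 1"
        and c3: "\<not> (\<forall>l\<in>set u. l = 0)" and "u \<noteq> []"
        using binary by auto
      then show ?thesis using cyclic_cocycle_mixed_eq[OF cocycle cyclic binary 3]
        unfolding delta_1_eq if_not_P[OF c1] if_P[OF c2] if_not_P[OF c3] by simp
    qed
  qed
qed

lemma cocycle_cyc_sum_one_at:
  assumes cocycle: "delta 2 F = szero" and "3 \<le> d"
  shows "cyc_sum F (one_at d 0) = of_nat d * F (one_at d 0)"
proof -
  have "0 \<in> set (one_at d 0)" "1 \<in> set (one_at d 0)"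
    using in_set_one_at(1)[of 0 d] in_set_one_at(2)[of 0 d 1] assms(2) by auto
  then have "F (rotate i (one_at d 0)) = F (one_at d 0)" for i
    using cocycle_mixed_eq[OF cocycle, of "rotate i (one_at d 0)"] set_one_at[of d 0] assms(2)
    by (simp only: set_rotate length_rotate) simp
  then show ?thesis by (simp add: cyc_sum_def)
qed

lemma lie_2_cocycle_mixed:
  fixes f :: "'k::field_char_0 ser"
  assumes "lie 2 f" "delta 2 f = szero"
    and "set u \<subseteq> {0,1}" "0 \<in> set u" "1 \<in> set u" "3 \<le> length u"
  shows "f u = 0"
proof -
  have "of_nat (length u) * f (one_at (length u) 0) = 0"
    using cocycle_cyc_sum_one_at[OF assms(2,6)] lie_cyc_sum[OF assms(1)] assms(6) by simp
  moreover have "length u \<noteq> 0" using assms(6) by linarith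
  ultimately show ?thesis using cocycle_mixed_eq[OF assms(2-6)] by simp
qed

lemma lie_2_cocycle_eq_bracket:
  fixes f :: "'k::field_char_0 ser"
  assumes lie: "lie 2 f" and cocycle: "delta 2 f = szero"
  shows "f = ssmult (f [0, 1]) (sbracket (gen 0) (gen 1))"
proof
  fix w
  show "f w = ssmult (f [0, 1]) (sbracket (gen 0) (gen 1)) w"
  proof (cases "set w \<subseteq> {0,1}")
    case False
    then have "\<not> set w \<subseteq> {..<2}" "w \<noteq> [0, 1]" "w \<noteq> [1, 0]" by auto
    then show ?thesis using lie by (simp add: lie_def ass_def ssmult_def sbracket_gen_gen)
  next
    case binary: True
    have pure: "f (replicate (length w) a) = 0" if "a \<in> {0, 1}" for a
      using that lie_nil[OF lie] cocycle_replicate[OF cocycle, of "length w"]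
      by (cases "length w = 0") auto
    show ?thesis
    proof (cases rule: binary_word_cases[OF binary])
      case zeros: 1
      have "f w = 0" by (subst zeros) (simp add: pure)
      moreover have "1 \<notin> set w" by (subst zeros) simp
      ultimately show ?thesis by (auto simp: ssmult_def sbracket_gen_gen)
    next
      case ones: 2
      have "f w = 0" by (subst ones) (simp add: pure)
      moreover have "0 \<notin> set w" by (subst ones) simp
      ultimately show ?thesis by (auto simp: ssmult_def sbracket_gen_gen)
    next
      case mixed: 3
      have "card {0, 1::nat} \<le> card (set w)" using mixed by (intro card_mono) auto
      then have "2 \<le> length w" using card_length[of w] by simp
      then consider "length w = 2" | "3 \<le> length w" by linarith
      then show ?thesis
      proof cases
        case 1
        then obtain a b where "w = [a, b]"
          by (metis (no_types, lifting) length_0_conv length_Suc_conv numeral_2_eq_2)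
        then have "w = [0, 1] \<or> w = [1, 0]" using binary mixed by auto
        then show ?thesis
          using lie_antisym_length_2[OF lie, of 0 1] by (auto simp: ssmult_def sbracket_gen_gen)
      next
        case 2
        then show ?thesis using lie_2_cocycle_mixed[OF lie cocycle binary mixed]
          by (auto simp: ssmult_def sbracket_gen_gen)
      qed
    qed
  qed
qed

section \<open>Two letters modulo commutators\<close>

lemma comm_closed_delta_2_if_delta_1:
  fixes f g :: "'k::field_char_0 ser"
  assumes "comm_closed 2 (ssub f (delta 1 g))"
  shows "comm_closed 3 (delta 2 f)"
proof -
  have "cyc_sum f = delta 1 (cyc_sum g)"
    using comm_closed_cyc_sum(2)[OF assms] by (simp add: fun_eq_iff cyc_sum_delta)
  then have "cyc_sum (delta 2 f) w = delta 2 (delta 1 (cyc_sum g)) w" for w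
    by (simp only: cyc_sum_delta)
  then have "cyc_sum (delta 2 f) w = 0" for w
    unfolding delta_2_delta_1 by (simp add: szero_def)
  moreover have "ass 3 (delta 2 f)" using ass_Suc_delta[of 2 f] by simp
  moreover have "delta 2 f [] = 0" by (simp add: delta_2_eq)
  ultimately show ?thesis by (simp add: comm_closed_iff_cyc_sum)
qed

lemma delta_1_exists_if_comm_closed_delta_2:
  fixes f :: "'k::field_char_0 ser"
  assumes f: "ass_pos 2 f" and closed: "comm_closed 3 (delta 2 f)"
  shows "\<exists>g. ass_pos 1 g \<and> comm_closed 2 (ssub f (delta 1 g))"
proof -
  let ?F = "cyc_sum f"
  define G :: "nat list \<Rightarrow> 'k" where "G w = (if w = [] then 0 else - ?F (one_at (length w) 0))" for w
  define g where "g w = (if set w \<subseteq> {0} then G w / of_nat (length w) else 0)" for w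
  have "delta 2 ?F = szero"
    using comm_closed_cyc_sum(2)[OF closed] by (simp add: fun_eq_iff cyc_sum_delta szero_def)
  moreover have "ass 2 ?F" "?F [] = 0" using f by (simp_all add: ass_pos_def ass_cyc_sum cyc_sum_def)
  ultimately have F_eq: "?F = delta 1 G"
    unfolding G_def by (intro cyclic_cocycle_eq_delta_1) (simp_all add: cyc_sum_rotate)
  have "cyc_sum g (replicate d 0) = G (replicate d 0)" for d
    by (cases "d = 0") (simp_all add: cyc_sum_def g_def G_def)
  then have cyc_sum_g: "delta 1 (cyc_sum g) = ?F" unfolding F_eq by (rule delta_1_cong)
  have g: "ass_pos 1 g" by (auto simp: ass_pos_def ass_def g_def G_def)
  have "ass 2 (ssub f (delta 1 g))"
    using f ass_Suc_delta[of 1 g] by (intro ass_ssub) (simp_all add: ass_pos_def numeral_2_eq_2)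
  moreover have "ssub f (delta 1 g) [] = 0"
    using f g delta_1_eq[of g "[]"] by (simp add: ssub_def ass_pos_def)
  ultimately have "comm_closed 2 (ssub f (delta 1 g))"
    using cyc_sum_g by (simp add: comm_closed_iff_cyc_sum cyc_sum_delta)
  then show ?thesis using g by blast
qed

theorem theorem2p7:
  fixes dummy :: "'k::field_char_0"
  shows
   "(\<forall>f::'k ser. lie 1 f \<longrightarrow> delta 1 f = szero)
  \<and> (\<forall>f::'k ser. ass_pos 1 f \<longrightarrow>
        (comm_closed 2 (delta 1 f) \<longleftrightarrow>
         (\<exists>c. comm_closed 1 (ssub f (ssmult c (gen 0))))))
  \<and> (lie 2 (sbracket (gen 0) (gen 1) :: 'k ser)
     \<and> delta 2 (sbracket (gen 0) (gen 1) :: 'k ser) = szero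
     \<and> (\<nexists>g::'k ser. lie 1 g \<and> delta 1 g = sbracket (gen 0) (gen 1))
     \<and> (\<forall>f::'k ser. lie 2 f \<longrightarrow> delta 2 f = szero \<longrightarrow>
          (\<exists>c g. lie 1 g \<and> f = sadd (ssmult c (sbracket (gen 0) (gen 1))) (delta 1 g))))
  \<and> (\<forall>f::'k ser. ass_pos 2 f \<longrightarrow>
        (comm_closed 3 (delta 2 f) \<longleftrightarrow>
         (\<exists>g. ass_pos 1 g \<and> comm_closed 2 (ssub f (delta 1 g)))))"
proof (intro conjI allI impI)
  show "\<nexists>g::'k ser. lie 1 g \<and> delta 1 g = sbracket (gen 0) (gen 1)"
  proof
    assume "\<exists>g::'k ser. lie 1 g \<and> delta 1 g = sbracket (gen 0) (gen 1)"
    then have "sbracket (gen 0) (gen 1) = (szero :: 'k ser)" using lie_1_delta by metis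
    then have "sbracket (gen 0) (gen 1) [0, 1] = (szero [0, 1] :: 'k)" by simp
    then show False by (simp add: sbracket_gen_gen szero_def)
  qed
next
  fix f :: "'k ser"
  assume "lie 2 f" "delta 2 f = szero"
  then have "f = sadd (ssmult (f [0, 1]) (sbracket (gen 0) (gen 1))) (delta 1 szero)"
    unfolding lie_1_delta[OF lie_szero] sadd_szero by (rule lie_2_cocycle_eq_bracket)
  then show "\<exists>c g. lie 1 g \<and> f = sadd (ssmult c (sbracket (gen 0) (gen 1))) (delta 1 g)"
    using lie_szero by blast
qed (use lie_1_delta comm_closed_delta_1_iff lie_2_bracket delta_2_bracket
      comm_closed_delta_2_if_delta_1 delta_1_exists_if_comm_closed_delta_2 in blast)+

end
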